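(* The variety $\mathsf{V}(S_{(4,424)})$ is the ai-semiring variety defined by the identities $x^2y\approx xy$, $xyz\approx yxz$, $xy\approx xy+y$, $x+yz\approx yx+yz$.
   Context: An ai-semiring is an algebra $(S,+,\cdot)$ with $(S,+)$ a semilattice, $(S,\cdot)$ a semigroup, and both distributive laws. $\mathsf{V}(S)$ is the variety generated by $S$; "the ai-semiring variety defined by identities $\Sigma$" is the class of all ai-semirings satisfying $\Sigma$. $S_{(4,424)}$ has carrier $\{1,2,3,4\}$; addition: $x+x=x$, $2+x=x$, $1+x=1$ for all $x$, $3+4=1$; multiplication (row $a$, column $b$ gives $a\cdot b$): row $1$: $1,3,3,1$; row $2$: $1,2,3,4$; row $3$: $1,3,3,1$; row $4$: $1,3,3,1$. *)

theory Defs
  imports Main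
begin

definition ai_semiring :: "'a set \<Rightarrow> ('a \<Rightarrow> 'a \<Rightarrow> 'a) \<Rightarrow> ('a \<Rightarrow> 'a \<Rightarrow> 'a) \<Rightarrow> bool" where
  "ai_semiring C p m \<longleftrightarrow>
     (\<forall>x\<in>C. \<forall>y\<in>C. p x y \<in> C \<and> m x y \<in> C) \<and>
     (\<forall>x\<in>C. \<forall>y\<in>C. \<forall>z\<in>C. p (p x y) z = p x (p y z)) \<and>
     (\<forall>x\<in>C. \<forall>y\<in>C. p x y = p y x) \<and>
     (\<forall>x\<in>C. p x x = x) \<and>
     (\<forall>x\<in>C. \<forall>y\<in>C. \<forall>z\<in>C. m (m x y) z = m x (m y z)) \<and>
     (\<forall>x\<in>C. \<forall>y\<in>C. \<forall>z\<in>C. m x (p y z) = p (m x y) (m x z)) \<and>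
     (\<forall>x\<in>C. \<forall>y\<in>C. \<forall>z\<in>C. m (p x y) z = p (m x z) (m y z))"

definition sat_Sigma :: "'a set \<Rightarrow> ('a \<Rightarrow> 'a \<Rightarrow> 'a) \<Rightarrow> ('a \<Rightarrow> 'a \<Rightarrow> 'a) \<Rightarrow> bool" where
  "sat_Sigma C p m \<longleftrightarrow>
     (\<forall>x\<in>C. \<forall>y\<in>C. m (m x x) y = m x y) \<and>
     (\<forall>x\<in>C. \<forall>y\<in>C. \<forall>z\<in>C. m (m x y) z = m (m y x) z) \<and>
     (\<forall>x\<in>C. \<forall>y\<in>C. m x y = p (m x y) y) \<and>
     (\<forall>x\<in>C. \<forall>y\<in>C. \<forall>z\<in>C. p x (m y z) = p (m y x) (m y z))"

definition S4_car :: "nat set" where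
  "S4_car = {1, 2, 3, 4}"

definition S4_add :: "nat \<Rightarrow> nat \<Rightarrow> nat" where
  "S4_add x y = (if x = y then x else if x = 2 then y else if y = 2 then x else 1)"

definition S4_mul :: "nat \<Rightarrow> nat \<Rightarrow> nat" where
  "S4_mul a b = (if a = 2 then b else if b = 2 \<or> b = 3 then 3 else 1)"

definition pow_car :: "('i \<Rightarrow> nat) set" where
  "pow_car = {f. \<forall>i. f i \<in> S4_car}"

definition pow_add :: "('i \<Rightarrow> nat) \<Rightarrow> ('i \<Rightarrow> nat) \<Rightarrow> ('i \<Rightarrow> nat)" where
  "pow_add f g = (\<lambda>i. S4_add (f i) (g i))"

definition pow_mul :: "('i \<Rightarrow> nat) \<Rightarrow> ('i \<Rightarrow> nat) \<Rightarrow> ('i \<Rightarrow> nat)" where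
  "pow_mul f g = (\<lambda>i. S4_mul (f i) (g i))"

text \<open>HSP-witness: B is a subalgebra of the power S^'i and h maps B homomorphically
  onto the algebra (C, p, m).  Thus (C,p,m) lies in HSP(S) = V(S).\<close>

definition HSP_witness ::
  "('i \<Rightarrow> nat) set \<Rightarrow> (('i \<Rightarrow> nat) \<Rightarrow> 'a) \<Rightarrow> 'a set \<Rightarrow> ('a \<Rightarrow> 'a \<Rightarrow> 'a) \<Rightarrow> ('a \<Rightarrow> 'a \<Rightarrow> 'a) \<Rightarrow> bool" where
  "HSP_witness B h C p m \<longleftrightarrow>
     B \<subseteq> pow_car \<and>
     (\<forall>f\<in>B. \<forall>g\<in>B. pow_add f g \<in> B \<and> pow_mul f g \<in> B) \<and>
     h ` B = C \<and>
     (\<forall>f\<in>B. \<forall>g\<in>B. h (pow_add f g) = p (h f) (h g) \<and> h (pow_mul f g) = m (h f) (h g))"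

end

theory Submission
  imports Defs
begin

text \<open>Soundness: S(4,424) is an ai-semiring satisfying Sigma (a finite check), and identities
  pass to direct powers, subalgebras and homomorphic images.

  Completeness: in a model of Sigma one derives \<open>x(yz) = (x + y)z\<close> and \<open>x + yz = y(x + z)\<close>, so a
  product of variables depends only on its last letter and on the set of its other letters,
  and \<open>a b + a' b' = (a + a')(b + b')\<close>. Hence every term equals \<open>(\<Sum>P)(\<Sum>L)\<close>, or \<open>\<Sum>L\<close> when \<open>P\<close> is
  empty, where \<open>L\<close> is the set of last letters of its monomials and \<open>P\<close> the set of their other
  letters. The term function of the term on S(4,424) determines \<open>P\<close> and \<open>L\<close>: evaluate it at the
  assignments sending one variable to 4 and all others to 2. So sending the term function of
  a term over \<open>C\<close> to its value in \<open>C\<close> is a well-defined homomorphism from a subalgebra of a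
  power of S(4,424) onto \<open>C\<close>.\<close>

lemma ai_semiring_pointwise:
  assumes "ai_semiring S a u"
  shows "ai_semiring {f. \<forall>i. f i \<in> S} (\<lambda>f g i. a (f i) (g i)) (\<lambda>f g i. u (f i) (g i))"
  using assms unfolding ai_semiring_def mem_Collect_eq fun_eq_iff by blast

lemma sat_Sigma_pointwise:
  assumes "sat_Sigma S a u"
  shows "sat_Sigma {f. \<forall>i. f i \<in> S} (\<lambda>f g i. a (f i) (g i)) (\<lambda>f g i. u (f i) (g i))"
  using assms unfolding sat_Sigma_def mem_Collect_eq fun_eq_iff by blast

lemma ai_semiring_subalgebra:
  assumes "ai_semiring C p m" "B \<subseteq> C" "\<forall>x\<in>B. \<forall>y\<in>B. p x y \<in> B \<and> m x y \<in> B"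
  shows "ai_semiring B p m"
  using assms unfolding ai_semiring_def by (meson subsetD)

lemma sat_Sigma_subset:
  assumes "sat_Sigma C p m" "B \<subseteq> C"
  shows "sat_Sigma B p m"
  using assms unfolding sat_Sigma_def by (meson subsetD)

lemma ai_semiring_hom_image:
  assumes "ai_semiring B p' m'" "h ` B = C"
    and "\<forall>x\<in>B. \<forall>y\<in>B. h (p' x y) = p (h x) (h y) \<and> h (m' x y) = m (h x) (h y)"
  shows "ai_semiring C p m"
  using assms unfolding ai_semiring_def by (auto simp: image_iff) (metis)+

lemma sat_Sigma_hom_image:
  assumes "sat_Sigma B p' m'" "h ` B = C" "\<forall>x\<in>B. \<forall>y\<in>B. p' x y \<in> B \<and> m' x y \<in> B"
    and "\<forall>x\<in>B. \<forall>y\<in>B. h (p' x y) = p (h x) (h y) \<and> h (m' x y) = m (h x) (h y)"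
  shows "sat_Sigma C p m"
  using assms unfolding sat_Sigma_def by (auto simp: image_iff) (metis)+

lemma ai_semiring_S4: "ai_semiring S4_car S4_add S4_mul"
  unfolding ai_semiring_def S4_car_def by (simp add: S4_add_def S4_mul_def)

lemma sat_Sigma_S4: "sat_Sigma S4_car S4_add S4_mul"
  unfolding sat_Sigma_def S4_car_def by (simp add: S4_add_def S4_mul_def)

lemma pow_eq_pointwise:
  "pow_car = {f. \<forall>i. f i \<in> S4_car}"
  "pow_add = (\<lambda>f g i. S4_add (f i) (g i))"
  "pow_mul = (\<lambda>f g i. S4_mul (f i) (g i))"
  by (simp_all add: pow_car_def pow_add_def[abs_def] pow_mul_def[abs_def])

lemma HSP_witness_imp_model:
  assumes "HSP_witness B h C p m"
  shows "ai_semiring C p m \<and> sat_Sigma C p m"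
proof -
  have pow: "ai_semiring pow_car pow_add pow_mul" "sat_Sigma pow_car pow_add pow_mul"
    unfolding pow_eq_pointwise
    by (intro ai_semiring_pointwise sat_Sigma_pointwise ai_semiring_S4 sat_Sigma_S4)+
  have B: "ai_semiring B pow_add pow_mul" "sat_Sigma B pow_add pow_mul"
    using assms ai_semiring_subalgebra[OF pow(1)] sat_Sigma_subset[OF pow(2)]
    unfolding HSP_witness_def by blast+
  show ?thesis
    using assms ai_semiring_hom_image[OF B(1)] sat_Sigma_hom_image[OF B(2)]
    unfolding HSP_witness_def by blast
qed

datatype 'a expr = Var 'a | Add "'a expr" "'a expr" | Mul "'a expr" "'a expr"

primrec eval_expr :: "('b \<Rightarrow> 'b \<Rightarrow> 'b) \<Rightarrow> ('b \<Rightarrow> 'b \<Rightarrow> 'b) \<Rightarrow> ('a \<Rightarrow> 'b) \<Rightarrow> 'a expr \<Rightarrow> 'b" where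
  "eval_expr p m s (Var a) = s a"
| "eval_expr p m s (Add t u) = p (eval_expr p m s t) (eval_expr p m s u)"
| "eval_expr p m s (Mul t u) = m (eval_expr p m s t) (eval_expr p m s u)"

primrec vars :: "'a expr \<Rightarrow> 'a set" where
  "vars (Var a) = {a}"
| "vars (Add t u) = vars t \<union> vars u"
| "vars (Mul t u) = vars t \<union> vars u"

text \<open>Distributing products over sums turns an expression into a sum of monomials;
  \<open>last_vars\<close> collects their last letters and \<open>prefix_vars\<close> all their other letters.\<close>

primrec prefix_vars :: "'a expr \<Rightarrow> 'a set" where
  "prefix_vars (Var a) = {}"
| "prefix_vars (Add t u) = prefix_vars t \<union> prefix_vars u"
| "prefix_vars (Mul t u) = vars t \<union> prefix_vars u"

primrec last_vars :: "'a expr \<Rightarrow> 'a set" where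
  "last_vars (Var a) = {a}"
| "last_vars (Add t u) = last_vars t \<union> last_vars u"
| "last_vars (Mul t u) = last_vars u"

lemma eval_expr_in:
  assumes "\<And>x y. x \<in> S \<Longrightarrow> y \<in> S \<Longrightarrow> p x y \<in> S \<and> m x y \<in> S" "\<And>a. a \<in> vars t \<Longrightarrow> s a \<in> S"
  shows "eval_expr p m s t \<in> S"
  using assms by (induction t) auto

lemma vars_eq_prefix_vars_Un_last_vars: "vars t = prefix_vars t \<union> last_vars t"
  by (induction t) auto

lemma finite_vars [simp]: "finite (vars t)"
  by (induction t) auto

lemma last_vars_nonempty [simp]: "last_vars t \<noteq> {}"
  by (induction t) auto

lemma vars_nonempty [simp]: "vars t \<noteq> {}"
  by (simp add: vars_eq_prefix_vars_Un_last_vars)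

lemma finite_prefix_vars [simp]: "finite (prefix_vars t)"
  and finite_last_vars [simp]: "finite (last_vars t)"
  using finite_vars[of t] by (simp_all add: vars_eq_prefix_vars_Un_last_vars)

lemma eval_expr_S4_point:
  "eval_expr S4_add S4_mul (\<lambda>a. if a = x then 4 else 2) t =
    (if x \<in> prefix_vars t then if x \<in> last_vars t then 1 else 3
     else if x \<in> last_vars t then 4 else 2)"
proof (induction t)
  case (Var a)
  then show ?case by simp
next
  case (Add t u)
  then show ?case
    by (cases "x \<in> prefix_vars t"; cases "x \<in> last_vars t";
        cases "x \<in> prefix_vars u"; cases "x \<in> last_vars u") (simp_all add: S4_add_def)
next
  case (Mul t u)
  have "x \<in> vars t \<longleftrightarrow> x \<in> prefix_vars t \<or> x \<in> last_vars t"
    by (simp add: vars_eq_prefix_vars_Un_last_vars)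
  with Mul show ?case
    by (cases "x \<in> prefix_vars t"; cases "x \<in> last_vars t";
        cases "x \<in> prefix_vars u"; cases "x \<in> last_vars u") (simp_all add: S4_mul_def)
qed

text \<open>The generator of \<open>a\<close> is the projection to coordinate \<open>a\<close>, cut down to the values 2 and 4
  so that term functions lie in \<open>pow_car\<close>; it still agrees with the projection at the point
  assignments of \<open>eval_expr_S4_point\<close>.\<close>

definition generator :: "'a \<Rightarrow> ('a \<Rightarrow> nat) \<Rightarrow> nat" where
  "generator a \<phi> = (if \<phi> a = 4 then 4 else 2)"

definition term_fun :: "'a expr \<Rightarrow> ('a \<Rightarrow> nat) \<Rightarrow> nat" where
  "term_fun t = eval_expr pow_add pow_mul generator t"

lemma term_fun_apply: "term_fun t \<phi> = eval_expr S4_add S4_mul (\<lambda>a. generator a \<phi>) t"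
  unfolding term_fun_def by (induction t) (simp_all add: pow_add_def pow_mul_def)

lemma term_fun_in_pow_car: "term_fun t \<in> pow_car"
  unfolding pow_car_def term_fun_apply mem_Collect_eq
  by (intro allI eval_expr_in) (auto simp: S4_car_def S4_add_def S4_mul_def generator_def)

lemma term_fun_eq_imp_same_vars:
  assumes "term_fun t = term_fun u"
  shows "prefix_vars t = prefix_vars u \<and> last_vars t = last_vars u"
proof -
  have point: "(\<lambda>a. generator a (\<lambda>b. if b = x then 4 else 2)) = (\<lambda>a. if a = x then 4 else 2)"
    for x :: 'a
    by (auto simp: generator_def)
  have eval_eq: "eval_expr S4_add S4_mul (\<lambda>a. if a = x then 4 else 2) t =
        eval_expr S4_add S4_mul (\<lambda>a. if a = x then 4 else 2) u" for x
    using fun_cong[OF assms, of "\<lambda>b. if b = x then 4 else 2"] unfolding term_fun_apply point .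
  have "(x \<in> prefix_vars t \<longleftrightarrow> x \<in> prefix_vars u) \<and> (x \<in> last_vars t \<longleftrightarrow> x \<in> last_vars u)" for x
    using eval_eq[of x] unfolding eval_expr_S4_point by (simp split: if_splits)
  then show ?thesis by blast
qed

locale sigma_model =
  fixes C :: "'a set" and p m :: "'a \<Rightarrow> 'a \<Rightarrow> 'a"
  assumes ai_semiring: "ai_semiring C p m" and sat_Sigma: "sat_Sigma C p m"
begin

lemma add_closed [simp]: "x \<in> C \<Longrightarrow> y \<in> C \<Longrightarrow> p x y \<in> C"
  and mul_closed [simp]: "x \<in> C \<Longrightarrow> y \<in> C \<Longrightarrow> m x y \<in> C"
  and add_assoc: "x \<in> C \<Longrightarrow> y \<in> C \<Longrightarrow> z \<in> C \<Longrightarrow> p (p x y) z = p x (p y z)"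
  and add_commute: "x \<in> C \<Longrightarrow> y \<in> C \<Longrightarrow> p x y = p y x"
  and add_idem: "x \<in> C \<Longrightarrow> p x x = x"
  and mul_assoc: "x \<in> C \<Longrightarrow> y \<in> C \<Longrightarrow> z \<in> C \<Longrightarrow> m (m x y) z = m x (m y z)"
  and distrib_left: "x \<in> C \<Longrightarrow> y \<in> C \<Longrightarrow> z \<in> C \<Longrightarrow> m x (p y z) = p (m x y) (m x z)"
  and distrib_right: "x \<in> C \<Longrightarrow> y \<in> C \<Longrightarrow> z \<in> C \<Longrightarrow> m (p x y) z = p (m x z) (m y z)"
  using ai_semiring unfolding ai_semiring_def by blast+

lemma mul_left_swap: "x \<in> C \<Longrightarrow> y \<in> C \<Longrightarrow> z \<in> C \<Longrightarrow> m (m x y) z = m (m y x) z"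
  and mul_absorb_right: "x \<in> C \<Longrightarrow> y \<in> C \<Longrightarrow> p (m x y) y = m x y"
  and add_mul_swap: "x \<in> C \<Longrightarrow> y \<in> C \<Longrightarrow> z \<in> C \<Longrightarrow> p x (m y z) = p (m y x) (m y z)"
  using sat_Sigma unfolding sat_Sigma_def by metis+

lemma add_left_commute: "x \<in> C \<Longrightarrow> y \<in> C \<Longrightarrow> z \<in> C \<Longrightarrow> p x (p y z) = p y (p x z)"
  by (metis add_assoc add_commute)

lemma add_mul_eq_mul_add: "x \<in> C \<Longrightarrow> y \<in> C \<Longrightarrow> z \<in> C \<Longrightarrow> p x (m y z) = m y (p x z)"
  by (simp add: add_mul_swap distrib_left)

lemma mul_mul_eq_mul_add:
  assumes "x \<in> C" "y \<in> C" "z \<in> C"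
  shows "m x (m y z) = m (p x y) z"
proof -
  have "m (p x y) z = p (m x z) (m y z)" using assms by (simp add: distrib_right)
  also have "\<dots> = m y (p (m x z) z)" using assms by (simp add: add_mul_eq_mul_add)
  also have "\<dots> = m y (m x z)" using assms by (simp add: mul_absorb_right)
  also have "\<dots> = m (m y x) z" using assms by (simp add: mul_assoc)
  also have "\<dots> = m (m x y) z" using assms by (simp add: mul_left_swap[of y x])
  also have "\<dots> = m x (m y z)" using assms by (simp add: mul_assoc)
  finally show ?thesis by simp
qed

lemma add_mul_mul:
  assumes "x \<in> C" "y \<in> C" "x' \<in> C" "y' \<in> C"
  shows "p (m x y) (m x' y') = m (p x x') (p y y')"
proof -
  have "m (p x x') (p y y') = p (m x (p y y')) (m x' (p y y'))"
    using assms by (simp add: distrib_right)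
  also have "\<dots> = p (p y' (m x y)) (p y (m x' y'))"
    using assms by (simp add: add_mul_eq_mul_add add_commute[of y])
  also have "\<dots> = p (p (m x y) y) (p (m x' y') y')"
    using assms by (simp add: add_assoc add_commute add_left_commute)
  finally show ?thesis
    using assms by (simp add: mul_absorb_right)
qed

definition is_join :: "'a set \<Rightarrow> 'a \<Rightarrow> bool" where
  "is_join A z \<longleftrightarrow> z \<in> C \<and> (\<forall>x\<in>A. p x z = z) \<and> (\<forall>y\<in>C. (\<forall>x\<in>A. p x y = y) \<longrightarrow> p z y = y)"

definition join :: "'a set \<Rightarrow> 'a" where
  "join A = (THE z. is_join A z)"

lemma is_join_unique: "is_join A z \<Longrightarrow> is_join A z' \<Longrightarrow> z = z'"
  unfolding is_join_def by (metis add_commute)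

lemma is_join_singleton: "x \<in> C \<Longrightarrow> is_join {x} x"
  unfolding is_join_def by (simp add: add_idem)

lemma is_join_Un:
  assumes "A \<subseteq> C" "B \<subseteq> C" "is_join A a" "is_join B b"
  shows "is_join (A \<union> B) (p a b)"
proof -
  have "p x (p a b) = p a b" if "x \<in> A \<union> B" for x
    using that assms unfolding is_join_def
    by (metis UnE add_assoc add_left_commute subsetD)
  moreover have "p (p a b) y = y" if "y \<in> C" "\<forall>x\<in>A \<union> B. p x y = y" for y
    using that assms unfolding is_join_def by (simp add: add_assoc)
  ultimately show ?thesis
    using assms unfolding is_join_def by simp
qed

lemma is_join_join:
  assumes "finite A" "A \<noteq> {}" "A \<subseteq> C"
  shows "is_join A (join A)"
proof -
  from assms have "\<exists>z. is_join A z"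
  proof (induction A rule: finite_ne_induct)
    case (singleton x)
    then show ?case using is_join_singleton by blast
  next
    case (insert x A)
    then obtain z where "is_join A z" by blast
    with insert.prems have "is_join ({x} \<union> A) (p x z)"
      by (intro is_join_Un is_join_singleton) auto
    then show ?case by auto
  qed
  then show ?thesis
    unfolding join_def using is_join_unique by (metis theI)
qed

lemma join_in:
  "finite A \<Longrightarrow> A \<noteq> {} \<Longrightarrow> A \<subseteq> C \<Longrightarrow> join A \<in> C"
  using is_join_join unfolding is_join_def by blast

lemma join_singleton: "x \<in> C \<Longrightarrow> join {x} = x"
  using is_join_join is_join_singleton is_join_unique by blast

lemma join_Un:
  assumes "finite A" "A \<noteq> {}" "A \<subseteq> C" "finite B" "B \<noteq> {}" "B \<subseteq> C"
  shows "join (A \<union> B) = p (join A) (join B)"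
  using assms is_join_join is_join_Un is_join_unique
  by (metis Un_empty finite_UnI le_sup_iff)

abbreviation interp :: "'a expr \<Rightarrow> 'a" where
  "interp t \<equiv> eval_expr p m (\<lambda>x. x) t"

lemma interp_in: "vars t \<subseteq> C \<Longrightarrow> interp t \<in> C"
  by (rule eval_expr_in) auto

lemma mul_interp_eq_mul_join:
  assumes "vars t \<subseteq> C" "y \<in> C"
  shows "m (interp t) y = m (join (vars t)) y"
  using assms
proof (induction t arbitrary: y)
  case (Var a)
  then show ?case by (simp add: join_singleton)
next
  case (Add t u)
  then have "m (interp (Add t u)) y = p (m (join (vars t)) y) (m (join (vars u)) y)"
    by (simp add: distrib_right interp_in)
  with Add.prems show ?case
    by (simp add: distrib_right join_Un join_in)
next
  case (Mul t u)
  have "m (interp (Mul t u)) y = m (interp t) (m (interp u) y)"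
    using Mul.prems by (simp add: mul_assoc interp_in)
  also have "\<dots> = m (join (vars t)) (m (join (vars u)) y)"
    using Mul by (simp add: interp_in join_in)
  finally show ?case
    using Mul.prems
    by (simp add: mul_mul_eq_mul_add join_Un join_in)
qed

lemma interp_normal_form:
  assumes "vars t \<subseteq> C"
  shows "interp t = (if prefix_vars t = {} then join (last_vars t)
                     else m (join (prefix_vars t)) (join (last_vars t)))"
  using assms
proof (induction t)
  case (Var a)
  then show ?case by (simp add: join_singleton)
next
  case (Add t u)
  have sub: "prefix_vars t \<subseteq> C" "last_vars t \<subseteq> C" "prefix_vars u \<subseteq> C" "last_vars u \<subseteq> C"
    using Add.prems by (auto simp: vars_eq_prefix_vars_Un_last_vars)
  show ?case
  proof (cases "prefix_vars t = {}"; cases "prefix_vars u = {}")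
    assume "prefix_vars t = {}" "prefix_vars u = {}"
    with Add sub show ?thesis by (simp add: join_Un)
  next
    assume "prefix_vars t = {}" "prefix_vars u \<noteq> {}"
    with Add sub show ?thesis by (simp add: join_Un join_in add_mul_eq_mul_add)
  next
    assume "prefix_vars t \<noteq> {}" "prefix_vars u = {}"
    with Add sub show ?thesis by (simp add: join_Un join_in add_mul_eq_mul_add add_commute)
  next
    assume "prefix_vars t \<noteq> {}" "prefix_vars u \<noteq> {}"
    with Add sub show ?thesis by (simp add: join_Un join_in add_mul_mul)
  qed
next
  case (Mul t u)
  have sub: "prefix_vars u \<subseteq> C" "last_vars u \<subseteq> C"
    using Mul.prems by (auto simp: vars_eq_prefix_vars_Un_last_vars)
  show ?case
  proof (cases "prefix_vars u = {}")
    case True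
    with Mul.IH(2) Mul.prems sub show ?thesis by (simp add: mul_interp_eq_mul_join join_in)
  next
    case False
    with Mul.IH(2) Mul.prems sub show ?thesis
      by (simp add: mul_interp_eq_mul_join mul_mul_eq_mul_add join_Un join_in)
  qed
qed

lemma interp_eq_interp:
  assumes "vars t \<subseteq> C" "vars u \<subseteq> C"
    and "prefix_vars t = prefix_vars u" "last_vars t = last_vars u"
  shows "interp t = interp u"
  using assms by (simp add: interp_normal_form)

lemma HSP_witness_term_fun:
  "HSP_witness (term_fun ` {t. vars t \<subseteq> C}) (\<lambda>f. interp (SOME t. vars t \<subseteq> C \<and> term_fun t = f)) C p m"
    (is "HSP_witness ?B ?decode C p m")
proof -
  have decode: "?decode (term_fun t) = interp t" if t: "vars t \<subseteq> C" for t
  proof -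
    let ?u = "SOME u. vars u \<subseteq> C \<and> term_fun u = term_fun t"
    have u: "vars ?u \<subseteq> C \<and> term_fun ?u = term_fun t"
      by (rule someI_ex) (use t in blast)
    then have "prefix_vars ?u = prefix_vars t \<and> last_vars ?u = last_vars t"
      using term_fun_eq_imp_same_vars by blast
    with t u show ?thesis
      by (intro interp_eq_interp) auto
  qed
  have closed_hom: "pow_add f g \<in> ?B \<and> pow_mul f g \<in> ?B \<and>
      ?decode (pow_add f g) = p (?decode f) (?decode g) \<and>
      ?decode (pow_mul f g) = m (?decode f) (?decode g)"
    if "f \<in> ?B" "g \<in> ?B" for f g
  proof -
    from that obtain t u where tu: "vars t \<subseteq> C" "vars u \<subseteq> C" "f = term_fun t" "g = term_fun u"
      by blast
    then have "pow_add f g = term_fun (Add t u)" "pow_mul f g = term_fun (Mul t u)"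
      by (simp_all add: term_fun_def)
    with tu show ?thesis
      using decode[of t] decode[of u] decode[of "Add t u"] decode[of "Mul t u"] by simp
  qed
  have "?decode ` ?B = C"
  proof
    show "?decode ` ?B \<subseteq> C"
      using decode interp_in by auto
    show "C \<subseteq> ?decode ` ?B"
    proof
      fix c assume "c \<in> C"
      then have "?decode (term_fun (Var c)) = c" "term_fun (Var c) \<in> ?B"
        using decode[of "Var c"] by auto
      then show "c \<in> ?decode ` ?B" by (rule image_eqI[OF sym])
    qed
  qed
  moreover have "?B \<subseteq> pow_car"
    using term_fun_in_pow_car by blast
  ultimately show ?thesis
    unfolding HSP_witness_def using closed_hom by blast
qed

end

theorem proposition3p2:
  fixes C :: "'a set" and p m :: "'a \<Rightarrow> 'a \<Rightarrow> 'a"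
  shows "(\<forall>(B :: ('i \<Rightarrow> nat) set) h. HSP_witness B h C p m
            \<longrightarrow> ai_semiring C p m \<and> sat_Sigma C p m)
       \<and> (ai_semiring C p m \<and> sat_Sigma C p m
            \<longrightarrow> (\<exists>(B :: (('a \<Rightarrow> nat) \<Rightarrow> nat) set) h. HSP_witness B h C p m))"
  using HSP_witness_imp_model sigma_model.HSP_witness_term_fun[OF sigma_model.intro] by blast

end
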